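(* Let $l>0$ and $(a,M)\in\mathcal B_l$. Let $(\omega,m)\in\mathcal{SF}$. Then $\mathcal T(\omega,m,\cdot)\in C^\infty(r_+,\bar r_+)$, and $\mathcal T(\omega,m,\cdot)$ has a unique critical point $r_{crit}(\omega,m)\in(r_+,\bar r_+)$ (i.e. a unique point where $\frac{d\mathcal T}{dr}=0$), which is a minimum. Moreover $r_{crit}(\omega,m)=r_s(\omega,m)$, where $r_s\in(r_+,\bar r_+)$ is the (unique) value with $\omega=\frac{am\Xi}{r_s^2+a^2}$, and $$\Big|\frac{d^2\mathcal T}{dr^2}(\omega,m,r_{crit})\Big|>0 .$$
   Context: Fix $l>0$. For $a\in\mathbb R$, $M>0$ set $\Delta(r)=(r^2+a^2)\big(1-\frac{r^2}{l^2}\big)-2Mr$. We write $(a,M)\in\mathcal B_l$ (subextremal) if $\Delta$ has four distinct real roots $\bar r_-<0\le r_-<r_+<\bar r_+$. Set $\Xi=1+\frac{a^2}{l^2}$, $\omega_+=\frac{a\Xi}{r_+^2+a^2}$, $\bar\omega_+=\frac{a\Xi}{\bar r_+^2+a^2}$. The superradiant set is $\mathcal{SF}=\{(\omega,m)\in\mathbb R\times\mathbb Z:\ (\omega-m\omega_+)(\omega-m\bar\omega_+)<0\}$ (equivalently $am\omega\in(\frac{a^2m^2\Xi}{\bar r_+^2+a^2},\frac{a^2m^2\Xi}{r_+^2+a^2})$). For $(\omega,m)\in\mathbb R\times\mathbb Z$ and $r\in(r_+,\bar r_+)$ define $$\mathcal T(\omega,m,r)=\frac{(r^2+a^2)^2}{\Delta(r)}\Big(\omega-\frac{am\Xi}{r^2+a^2}\Big)^2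 .$$ *)

theory Defs
  imports "HOL-Analysis.Analysis"
begin

definition Delta :: "real \<Rightarrow> real \<Rightarrow> real \<Rightarrow> real \<Rightarrow> real" where
  "Delta l a M r = (r^2 + a^2) * (1 - r^2 / l^2) - 2 * M * r"

definition subextremal_roots ::
  "real \<Rightarrow> real \<Rightarrow> real \<Rightarrow> real \<Rightarrow> real \<Rightarrow> real \<Rightarrow> real \<Rightarrow> bool" where
  "subextremal_roots l a M rbm rm rp rbp \<longleftrightarrow>
     rbm < 0 \<and> 0 \<le> rm \<and> rm < rp \<and> rp < rbp \<and>
     {r. Delta l a M r = 0} = {rbm, rm, rp, rbp}"

definition Xi :: "real \<Rightarrow> real \<Rightarrow> real" where
  "Xi l a = 1 + a^2 / l^2"

definition superradiant ::
  "real \<Rightarrow> real \<Rightarrow> real \<Rightarrow> real \<Rightarrow> real \<Rightarrow> int \<Rightarrow> bool" where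
  "superradiant l a rp rbp \<omega> m \<longleftrightarrow>
     (\<omega> - real_of_int m * (a * Xi l a / (rp^2 + a^2))) *
     (\<omega> - real_of_int m * (a * Xi l a / (rbp^2 + a^2))) < 0"

definition TT :: "real \<Rightarrow> real \<Rightarrow> real \<Rightarrow> real \<Rightarrow> int \<Rightarrow> real \<Rightarrow> real" where
  "TT l a M \<omega> m r =
     (r^2 + a^2)^2 / Delta l a M r * (\<omega> - a * real_of_int m * Xi l a / (r^2 + a^2))^2"

definition smooth_on :: "real set \<Rightarrow> (real \<Rightarrow> real) \<Rightarrow> bool" where
  "smooth_on S f \<longleftrightarrow> (\<forall>k. \<forall>x\<in>S. ((deriv ^^ k) f) differentiable (at x))"

end

theory Submission
  imports Defs "HOL-Computational_Algebra.Polynomial"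
begin

text \<open>Delta is a quartic with leading coefficient -1/l^2 and the four given roots, so
  Delta = (r - rbm)(r - rm)(r - rp)(rbp - r) / l^2, which is positive on (rp, rbp).
  Superradiance places the solution of omega (r^2 + a^2) = a m Xi at a unique rs in this
  interval, and then T = g^2 / Delta with g = omega (r^2 - rs^2). Hence T' = g (4 omega r Delta - g Delta') / Delta^2, and the second factor
  never vanishes on (rp, rbp): up to the factor omega / l^2, its numerator 4 r q - (r^2 - s) q'
  (q the root product, s = rs^2) is affine in s and positive at both s = rp^2 and s = rbp^2.
  So rs is the only critical point, T \<ge> 0 = T rs, and T''(rs) = 8 (omega rs)^2 / Delta rs > 0.\<close>

lemma poly_div_power_has_real_derivative:
  fixes P D :: "real poly"
  assumes "poly D x \<noteq> 0"
  shows "((\<lambda>y. poly P y / poly D y ^ n) has_real_derivative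
     poly (pderiv P * D - smult (of_nat n) (P * pderiv D)) x / poly D x ^ Suc n) (at x)"
proof -
  have "((\<lambda>y. poly P y / poly D y ^ n) has_real_derivative
     (poly (pderiv P) x * poly D x ^ n - poly P x * (of_nat n * (poly (pderiv D) x * poly D x ^ (n - Suc 0))))
      / (poly D x ^ n * poly D x ^ n)) (at x)"
    using assms by (intro DERIV_divide DERIV_power poly_DERIV) auto
  moreover have "(poly (pderiv P) x * poly D x ^ n - poly P x * (of_nat n * (poly (pderiv D) x * poly D x ^ (n - Suc 0))))
      / (poly D x ^ n * poly D x ^ n)
    = poly (pderiv P * D - smult (of_nat n) (P * pderiv D)) x / poly D x ^ Suc n"
    using assms by (cases n) (simp_all add: field_simps power_Suc)
  ultimately show ?thesis by simp
qed

lemma smooth_on_poly_div_power: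
  fixes P D :: "real poly" and f :: "real \<Rightarrow> real"
  assumes S: "open S" and D: "\<And>x. x \<in> S \<Longrightarrow> poly D x \<noteq> 0"
    and f: "\<And>x. x \<in> S \<Longrightarrow> f x = poly P x / poly D x ^ n"
  shows "smooth_on S f"
proof -
  have deriv_poly_div_power: "\<exists>P n. \<forall>x\<in>S. (deriv ^^ k) f x = poly P x / poly D x ^ n" for k
  proof (induction k)
    case 0
    then show ?case using f by auto
  next
    case (Suc k)
    then obtain P n where h: "\<forall>x\<in>S. (deriv ^^ k) f x = poly P x / poly D x ^ n" by blast
    have "(deriv ^^ Suc k) f x
        = poly (pderiv P * D - smult (of_nat n) (P * pderiv D)) x / poly D x ^ Suc n" if x: "x \<in> S" for x
    proof -
      have "eventually (\<lambda>y. (deriv ^^ k) f y = poly P y / poly D y ^ n) (nhds x)"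
        using eventually_nhds_in_open[OF S x] by (rule eventually_mono) (use h in auto)
      then have "(deriv ^^ Suc k) f x = deriv (\<lambda>y. poly P y / poly D y ^ n) x"
        by (simp add: deriv_cong_ev)
      then show ?thesis
        using poly_div_power_has_real_derivative[of D x P n] D x DERIV_imp_deriv by auto
    qed
    then show ?case by blast
  qed
  show ?thesis unfolding smooth_on_def
  proof (intro allI ballI)
    fix k x assume x: "x \<in> S"
    obtain P n where h: "\<forall>x\<in>S. (deriv ^^ k) f x = poly P x / poly D x ^ n"
      using deriv_poly_div_power by blast
    have ev: "eventually (\<lambda>y. (deriv ^^ k) f y = poly P y / poly D y ^ n) (nhds x)"
      using eventually_nhds_in_open[OF S x] by (rule eventually_mono) (use h in auto)
    have "((deriv ^^ k) f has_real_derivative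
        poly (pderiv P * D - smult (of_nat n) (P * pderiv D)) x / poly D x ^ Suc n) (at x)"
      using poly_div_power_has_real_derivative[of D x P n] D x DERIV_cong_ev[OF refl ev refl] by auto
    then show "(deriv ^^ k) f differentiable (at x)" unfolding real_differentiable_def by blast
  qed
qed

lemma Delta_eq_root_product:
  fixes l a M r1 r2 r3 r4 :: real
  assumes "0 < l" and "r1 < r2" "r2 < r3" "r3 < r4"
    and "Delta l a M r1 = 0" "Delta l a M r2 = 0" "Delta l a M r3 = 0" "Delta l a M r4 = 0"
  shows "Delta l a M x = (x - r1) * (x - r2) * (x - r3) * (r4 - x) / l^2"
proof -
  define il where "il = 1 / l^2"
  define R where "R = [:a^2 + r1*r2*r3*r4*il,
      -2*M - (r1*r2*r3 + r1*r2*r4 + r1*r3*r4 + r2*r3*r4)*il,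
      1 - a^2*il + (r1*r2 + r1*r3 + r1*r4 + r2*r3 + r2*r4 + r3*r4)*il,
      -(r1 + r2 + r3 + r4)*il:]"
  have "poly R y = (y^2 + a^2) * (1 - y^2*il) - 2*M*y - (y - r1) * (y - r2) * (y - r3) * (r4 - y) * il" for y
    unfolding R_def by simp algebra
  then have poly_R: "poly R y = Delta l a M y - (y - r1) * (y - r2) * (y - r3) * (r4 - y) / l^2" for y
    unfolding Delta_def il_def by simp
  have "degree R \<le> 3"
    unfolding R_def by (rule order.trans[OF degree_pCons_le]) (auto intro!: order.trans[OF degree_pCons_le])
  then have "R = 0"
    using assms by (intro poly_eqI_degree[where A = "{r1, r2, r3, r4}"]) (auto simp: poly_R)
  then show ?thesis using poly_R[of x] by simp
qed

lemma critical_term_pos_at_inner: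
  fixes r A B C D :: real
  assumes "0 < r" "r < A" "0 < C" "C \<le> B" "C < r" "0 < D"
  shows "4*r*(A*B*C*D) - (r^2 - (r - C)^2) * (B*C*D + A*C*D + A*B*D - A*B*C) > 0"
proof -
  have "4*r*(A*B*C*D) - (r^2 - (r - C)^2) * (B*C*D + A*C*D + A*B*D - A*B*C)
      = C * (D * (C*B*(2*A - 2*r + C) + A*(2*r - C)*(B - C)) + (2*r - C)*A*B*C)"
    by (simp add: algebra_simps power2_eq_square)
  also have "\<dots> > 0"
    using assms by (intro mult_pos_pos add_pos_nonneg add_nonneg_pos mult_nonneg_nonneg) auto
  finally show ?thesis .
qed

lemma critical_term_pos_at_outer:
  fixes r A B C D :: real
  assumes "0 < r" "r < A" "0 < C" "C \<le> B" "C < r" "0 < D"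
  shows "4*r*(A*B*C*D) - (r^2 - (r + D)^2) * (B*C*D + A*C*D + A*B*D - A*B*C) > 0"
proof -
  have "4*r*(A*B*C*D) - (r^2 - (r + D)^2) * (B*C*D + A*C*D + A*B*D - A*B*C)
      = D * (2*r*A*B*C + A*B*D*(2*r - C) + A*B*D^2 + (2*r + D)*C*D*(A + B))"
    by (simp add: algebra_simps power2_eq_square)
  also have "\<dots> > 0"
    using assms by (intro mult_pos_pos add_pos_pos) auto
  finally show ?thesis .
qed

text \<open>With \<open>A, B, C, D\<close> the factors of \<open>(r - r1)(r - r2)(r - r3)(r4 - r)\<close>, the
  bracket is the \<open>r\<close>-derivative of this product; the whole expression is affine in \<open>s\<close>.\<close>
lemma critical_term_pos:
  fixes r A B C D s :: real
  assumes "0 < r" "r < A" "0 < C" "C \<le> B" "C < r" "0 < D"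
    and "(r - C)^2 \<le> s" "s \<le> (r + D)^2"
  shows "4*r*(A*B*C*D) - (r^2 - s) * (B*C*D + A*C*D + A*B*D - A*B*C) > 0"
proof (cases "B*C*D + A*C*D + A*B*D - A*B*C \<ge> 0")
  case True
  then have "(s - (r - C)^2) * (B*C*D + A*C*D + A*B*D - A*B*C) \<ge> 0"
    using assms by simp
  then show ?thesis
    using critical_term_pos_at_inner[OF assms(1-6)] by (simp add: algebra_simps)
next
  case False
  then have "(s - (r + D)^2) * (B*C*D + A*C*D + A*B*D - A*B*C) \<ge> 0"
    using assms by (simp add: mult_nonpos_nonpos)
  then show ?thesis
    using critical_term_pos_at_outer[OF assms(1-6)] by (simp add: algebra_simps)
qed

lemma product_neg_imp_between:
  fixes u v c :: real
  assumes "u < v" "(u - c) * (v - c) < 0"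
  shows "u < c" "c < v"
proof -
  show "u < c"
  proof (rule ccontr)
    assume "\<not> u < c"
    then have "(u - c) * (v - c) \<ge> 0" using assms(1) by simp
    then show False using assms(2) by simp
  qed
  show "c < v"
  proof (rule ccontr)
    assume "\<not> c < v"
    then have "(u - c) * (v - c) \<ge> 0" using assms(1) by (simp add: mult_nonpos_nonpos)
    then show False using assms(2) by simp
  qed
qed

lemma superradiant_bounds:
  fixes u v \<omega> K :: real
  assumes "0 < u" "u < v" "(\<omega> - K / u) * (\<omega> - K / v) < 0"
  shows "\<omega> \<noteq> 0" "u < K / \<omega>" "K / \<omega> < v"
proof -
  show "\<omega> \<noteq> 0"
  proof
    assume "\<omega> = 0"
    then have "(\<omega> - K / u) * (\<omega> - K / v) = K^2 / (u * v)" by (simp add: power2_eq_square)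
    moreover have "K^2 / (u * v) \<ge> 0" using assms by simp
    ultimately show False using assms(3) by linarith
  qed
  then have "(\<omega> - K / u) * (\<omega> - K / v) = \<omega>^2 / (u * v) * ((u - K / \<omega>) * (v - K / \<omega>))"
    using assms by (simp add: field_simps power2_eq_square)
  moreover have "\<omega>^2 / (u * v) > 0" using assms \<open>\<omega> \<noteq> 0\<close> by simp
  ultimately have "(u - K / \<omega>) * (v - K / \<omega>) < 0"
    using assms(3) by (metis mult_less_0_iff not_less_iff_gr_or_eq)
  then show "u < K / \<omega>" "K / \<omega> < v"
    using product_neg_imp_between assms(2) by blast+
qed

locale superradiant_mode =
  fixes l a M rbm rm rp rbp \<omega> :: real and m :: int
  assumes l_pos: "0 < l"
    and roots: "subextremal_roots l a M rbm rm rp rbp"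
    and superradiant: "superradiant l a rp rbp \<omega> m"
begin

lemma roots_ordered: "rbm < 0" "0 \<le> rm" "rm < rp" "rp < rbp"
  using roots unfolding subextremal_roots_def by auto

lemma Delta_eq: "Delta l a M r = (r - rbm) * (r - rm) * (r - rp) * (rbp - r) / l^2"
proof -
  have "Delta l a M rbm = 0" "Delta l a M rm = 0" "Delta l a M rp = 0" "Delta l a M rbp = 0"
    using roots unfolding subextremal_roots_def by blast+
  moreover have "rbm < rm" using roots_ordered by linarith
  ultimately show ?thesis
    using Delta_eq_root_product[OF l_pos] roots_ordered by blast
qed

lemma Delta_pos: "r \<in> {rp<..<rbp} \<Longrightarrow> 0 < Delta l a M r"
  using roots_ordered l_pos by (simp add: Delta_eq)

definition Delta_deriv :: "real \<Rightarrow> real" where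
  "Delta_deriv r = ((r - rm) * (r - rp) * (rbp - r) + (r - rbm) * (r - rp) * (rbp - r)
      + (r - rbm) * (r - rm) * (rbp - r) - (r - rbm) * (r - rm) * (r - rp)) / l^2"

lemma Delta_has_derivative: "(Delta l a M has_real_derivative Delta_deriv r) (at r)"
proof -
  have "((\<lambda>r. (r - rbm) * (r - rm) * (r - rp) * (rbp - r)) has_real_derivative
      (r - rm) * (r - rp) * (rbp - r) + (r - rbm) * (r - rp) * (rbp - r)
      + (r - rbm) * (r - rm) * (rbp - r) - (r - rbm) * (r - rm) * (r - rp)) (at r)"
    by (auto intro!: derivative_eq_intros simp: algebra_simps)
  then have "((\<lambda>r. (r - rbm) * (r - rm) * (r - rp) * (rbp - r) / l^2) has_real_derivative
      Delta_deriv r) (at r)"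
    unfolding Delta_deriv_def by (rule DERIV_cdivide)
  moreover have "Delta l a M = (\<lambda>r. (r - rbm) * (r - rm) * (r - rp) * (rbp - r) / l^2)"
    using Delta_eq by blast
  ultimately show ?thesis by simp
qed

definition resonance_radius :: real where
  "resonance_radius = sqrt (a * real_of_int m * Xi l a / \<omega> - a^2)"

lemma resonance_frequency_bounds:
  "\<omega> \<noteq> 0" "rp^2 + a^2 < a * real_of_int m * Xi l a / \<omega>"
  "a * real_of_int m * Xi l a / \<omega> < rbp^2 + a^2"
proof -
  have "0 < rp^2 + a^2" "rp^2 + a^2 < rbp^2 + a^2"
    using roots_ordered by (simp_all add: add_pos_nonneg power_strict_mono)
  moreover have "(\<omega> - a * real_of_int m * Xi l a / (rp^2 + a^2))
      * (\<omega> - a * real_of_int m * Xi l a / (rbp^2 + a^2)) < 0"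
    using superradiant unfolding superradiant_def by (simp add: ac_simps)
  ultimately show "\<omega> \<noteq> 0" "rp^2 + a^2 < a * real_of_int m * Xi l a / \<omega>"
    "a * real_of_int m * Xi l a / \<omega> < rbp^2 + a^2"
    by (rule superradiant_bounds)+
qed

lemma omega_ne_0: "\<omega> \<noteq> 0"
  by (rule resonance_frequency_bounds(1))

lemma resonance_radius_nonneg: "0 \<le> resonance_radius"
  and resonance_radius_sq: "resonance_radius^2 = a * real_of_int m * Xi l a / \<omega> - a^2"
proof -
  have "a^2 \<le> a * real_of_int m * Xi l a / \<omega>"
    using resonance_frequency_bounds(2) zero_le_power2[of rp] by linarith
  then show "0 \<le> resonance_radius" "resonance_radius^2 = a * real_of_int m * Xi l a / \<omega> - a^2"
    unfolding resonance_radius_def by simp_all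
qed

lemma resonance_radius_mem: "resonance_radius \<in> {rp<..<rbp}"
proof -
  have "rp^2 < resonance_radius^2" "resonance_radius^2 < rbp^2"
    using resonance_frequency_bounds by (simp_all add: resonance_radius_sq)
  moreover have "0 < rp" "0 < rbp" using roots_ordered by simp_all
  ultimately show ?thesis
    using resonance_radius_nonneg by (auto simp: power_less_imp_less_base)
qed

lemma mode_factor_eq:
  "\<omega> * (r^2 + a^2) - a * real_of_int m * Xi l a = \<omega> * (r^2 - resonance_radius^2)"
  using omega_ne_0 by (simp add: resonance_radius_sq field_simps)

lemma omega_eq_iff:
  assumes "r \<in> {rp<..<rbp}"
  shows "\<omega> = a * real_of_int m * Xi l a / (r^2 + a^2) \<longleftrightarrow> r = resonance_radius"
proof -
  have "0 < r" "0 < r^2 + a^2" "0 < resonance_radius"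
    using assms roots_ordered resonance_radius_mem by (auto simp: add_pos_nonneg)
  then have "\<omega> = a * real_of_int m * Xi l a / (r^2 + a^2)
      \<longleftrightarrow> \<omega> * (r^2 + a^2) - a * real_of_int m * Xi l a = 0"
    using nonzero_eq_divide_eq[of "r^2 + a^2" \<omega> "a * real_of_int m * Xi l a"] by auto
  also have "\<dots> \<longleftrightarrow> \<omega> * (r^2 - resonance_radius^2) = 0"
    by (simp add: mode_factor_eq)
  also have "\<dots> \<longleftrightarrow> r = resonance_radius"
    using omega_ne_0 \<open>0 < r\<close> \<open>0 < resonance_radius\<close> by (simp add: power2_eq_iff_nonneg)
  finally show ?thesis .
qed

lemma TT_eq:
  assumes "r \<in> {rp<..<rbp}"
  shows "TT l a M \<omega> m r = (\<omega> * (r^2 - resonance_radius^2))^2 / Delta l a M r"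
proof -
  have "0 < r^2 + a^2" using assms roots_ordered by (simp add: add_pos_nonneg)
  then have "(r^2 + a^2) * (\<omega> - a * real_of_int m * Xi l a / (r^2 + a^2))
      = \<omega> * (r^2 + a^2) - a * real_of_int m * Xi l a"
    by (simp add: right_diff_distrib mult.commute)
  then show ?thesis
    unfolding TT_def mode_factor_eq[symmetric] by (simp add: power_mult_distrib[symmetric])
qed

definition TT_deriv_cofactor :: "real \<Rightarrow> real" where
  "TT_deriv_cofactor r = \<omega> * (4 * r * Delta l a M r - (r^2 - resonance_radius^2) * Delta_deriv r)
      / Delta l a M r ^ 2"

lemma TT_has_derivative:
  assumes "r \<in> {rp<..<rbp}"
  shows "(TT l a M \<omega> m has_real_derivative
      \<omega> * (r^2 - resonance_radius^2) * TT_deriv_cofactor r) (at r)"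
proof -
  define g where "g r = \<omega> * (r^2 - resonance_radius^2)" for r
  have "(g has_real_derivative 2 * \<omega> * r) (at r)"
    unfolding g_def by (auto intro!: derivative_eq_intros)
  then have "((\<lambda>r. g r^2 / Delta l a M r) has_real_derivative
      (of_nat 2 * (2 * \<omega> * r * g r ^ (2 - Suc 0)) * Delta l a M r - g r^2 * Delta_deriv r)
        / (Delta l a M r * Delta l a M r)) (at r)"
    using Delta_pos[OF assms] by (intro DERIV_divide DERIV_power Delta_has_derivative) auto
  moreover have "(of_nat 2 * (2 * \<omega> * r * g r ^ (2 - Suc 0)) * Delta l a M r - g r^2 * Delta_deriv r)
        / (Delta l a M r * Delta l a M r) = g r * TT_deriv_cofactor r"
    unfolding TT_deriv_cofactor_def g_def by (simp add: field_simps power2_eq_square)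
  moreover have "eventually (\<lambda>r. TT l a M \<omega> m r = g r^2 / Delta l a M r) (nhds r)"
    using eventually_nhds_in_open[OF open_greaterThanLessThan assms]
    by (rule eventually_mono) (simp add: TT_eq g_def)
  ultimately show ?thesis
    unfolding g_def by (simp add: DERIV_cong_ev)
qed

lemma deriv_TT:
  "r \<in> {rp<..<rbp} \<Longrightarrow>
    deriv (TT l a M \<omega> m) r = \<omega> * (r^2 - resonance_radius^2) * TT_deriv_cofactor r"
  by (rule DERIV_imp_deriv[OF TT_has_derivative])

lemma TT_deriv_cofactor_ne_0:
  assumes "r \<in> {rp<..<rbp}"
  shows "TT_deriv_cofactor r \<noteq> 0"
proof -
  have "0 < 4 * r * ((r - rbm) * (r - rm) * (r - rp) * (rbp - r))
      - (r^2 - resonance_radius^2) * ((r - rm) * (r - rp) * (rbp - r) + (r - rbm) * (r - rp) * (rbp - r)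
        + (r - rbm) * (r - rm) * (rbp - r) - (r - rbm) * (r - rm) * (r - rp))"
  proof (rule critical_term_pos)
    show "(r - (r - rp))^2 \<le> resonance_radius^2" "resonance_radius^2 \<le> (r + (rbp - r))^2"
      using resonance_radius_mem roots_ordered
      by (simp_all add: power_mono less_imp_le)
  qed (use assms roots_ordered in auto)
  moreover have "4 * r * Delta l a M r - (r^2 - resonance_radius^2) * Delta_deriv r
    = (4 * r * ((r - rbm) * (r - rm) * (r - rp) * (rbp - r))
      - (r^2 - resonance_radius^2) * ((r - rm) * (r - rp) * (rbp - r) + (r - rbm) * (r - rp) * (rbp - r)
        + (r - rbm) * (r - rm) * (rbp - r) - (r - rbm) * (r - rm) * (r - rp))) / l^2"
    unfolding Delta_eq Delta_deriv_def by (simp only: times_divide_eq_right diff_divide_distrib[symmetric])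
  ultimately have "0 < 4 * r * Delta l a M r - (r^2 - resonance_radius^2) * Delta_deriv r"
    using l_pos by simp
  then show ?thesis
    unfolding TT_deriv_cofactor_def using omega_ne_0 Delta_pos[OF assms] by simp
qed

lemma deriv_TT_eq_0_iff:
  assumes "r \<in> {rp<..<rbp}"
  shows "deriv (TT l a M \<omega> m) r = 0 \<longleftrightarrow> r = resonance_radius"
proof -
  have "0 < r" using assms roots_ordered by simp
  then show ?thesis
    using deriv_TT[OF assms] omega_ne_0 TT_deriv_cofactor_ne_0[OF assms] resonance_radius_nonneg
    by (simp add: power2_eq_iff_nonneg)
qed

lemma TT_resonance_le:
  assumes "r \<in> {rp<..<rbp}"
  shows "TT l a M \<omega> m resonance_radius \<le> TT l a M \<omega> m r"
  using TT_eq[OF assms] TT_eq[OF resonance_radius_mem] Delta_pos[OF assms] by simp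

lemma deriv2_TT_resonance_pos: "0 < deriv (deriv (TT l a M \<omega> m)) resonance_radius"
proof -
  let ?rs = resonance_radius
  have "Delta_deriv differentiable (at ?rs)"
    unfolding Delta_deriv_def using l_pos by (intro derivative_intros) auto
  moreover have "Delta l a M differentiable (at ?rs)"
    using Delta_has_derivative real_differentiable_def by blast
  ultimately have "TT_deriv_cofactor differentiable (at ?rs)"
    unfolding TT_deriv_cofactor_def using Delta_pos[OF resonance_radius_mem]
    by (intro derivative_intros) auto
  then obtain H' where H': "(TT_deriv_cofactor has_real_derivative H') (at ?rs)"
    by (auto simp: real_differentiable_def)
  have "((\<lambda>r. \<omega> * (r^2 - ?rs^2) * TT_deriv_cofactor r) has_real_derivative
      2 * \<omega> * ?rs * TT_deriv_cofactor ?rs) (at ?rs)"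
    using H' by (auto intro!: derivative_eq_intros)
  moreover have "eventually (\<lambda>r. deriv (TT l a M \<omega> m) r
      = \<omega> * (r^2 - ?rs^2) * TT_deriv_cofactor r) (nhds ?rs)"
    using eventually_nhds_in_open[OF open_greaterThanLessThan resonance_radius_mem]
    by (rule eventually_mono) (rule deriv_TT)
  ultimately have "deriv (deriv (TT l a M \<omega> m)) ?rs = 2 * \<omega> * ?rs * TT_deriv_cofactor ?rs"
    by (intro DERIV_imp_deriv) (simp add: DERIV_cong_ev)
  also have "\<dots> = 8 * (\<omega> * ?rs)^2 / Delta l a M ?rs"
    using Delta_pos[OF resonance_radius_mem]
    by (simp add: TT_deriv_cofactor_def power2_eq_square)
  also have "\<dots> > 0"
    using omega_ne_0 resonance_radius_mem roots_ordered Delta_pos[OF resonance_radius_mem] by simp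
  finally show ?thesis .
qed

lemma smooth_on_TT: "smooth_on {rp<..<rbp} (TT l a M \<omega> m)"
proof (rule smooth_on_poly_div_power)
  let ?D = "[:a^2, -2 * M, 1 - a^2 / l^2, 0, -1 / l^2:]"
  let ?G = "[:-\<omega> * resonance_radius^2, 0, \<omega>:]"
  have "poly ?D r = Delta l a M r" for r
    unfolding Delta_def using l_pos by (simp add: field_simps power2_eq_square)
  moreover have "poly ?G r = \<omega> * (r^2 - resonance_radius^2)" for r
    by (simp add: algebra_simps power2_eq_square)
  ultimately show "poly ?D r \<noteq> 0" "TT l a M \<omega> m r = poly (?G^2) r / poly ?D r ^ 1"
    if "r \<in> {rp<..<rbp}" for r
    using that Delta_pos TT_eq by (simp_all add: less_imp_neq[symmetric])
qed simp

end

theorem mainTheorem1: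
  fixes l a M rbm rm rp rbp \<omega> :: real and m :: int
  assumes "l > 0" and "M > 0"
    and "subextremal_roots l a M rbm rm rp rbp"
    and "superradiant l a rp rbp \<omega> m"
  shows "smooth_on {rp<..<rbp} (TT l a M \<omega> m)
    \<and> (\<exists>!r. r \<in> {rp<..<rbp} \<and> deriv (TT l a M \<omega> m) r = 0)
    \<and> (\<forall>r\<in>{rp<..<rbp}. deriv (TT l a M \<omega> m) r = 0 \<longrightarrow>
          (\<forall>s\<in>{rp<..<rbp}. TT l a M \<omega> m r \<le> TT l a M \<omega> m s)
        \<and> (\<exists>!rs. rs \<in> {rp<..<rbp} \<and> \<omega> = a * real_of_int m * Xi l a / (rs^2 + a^2))
        \<and> \<omega> = a * real_of_int m * Xi l a / (r^2 + a^2)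
        \<and> \<bar>deriv (deriv (TT l a M \<omega> m)) r\<bar> > 0)"
proof -
  interpret superradiant_mode l a M rbm rm rp rbp \<omega> m
    using assms(1,3,4) by unfold_locales
  show ?thesis
  proof (intro conjI ballI impI)
    show "smooth_on {rp<..<rbp} (TT l a M \<omega> m)"
      by (rule smooth_on_TT)
    show "\<exists>!r. r \<in> {rp<..<rbp} \<and> deriv (TT l a M \<omega> m) r = 0"
      using resonance_radius_mem deriv_TT_eq_0_iff by blast
    show "\<exists>!rs. rs \<in> {rp<..<rbp} \<and> \<omega> = a * real_of_int m * Xi l a / (rs^2 + a^2)"
      using resonance_radius_mem omega_eq_iff by blast
  next
    fix r assume "r \<in> {rp<..<rbp}" "deriv (TT l a M \<omega> m) r = 0"
    then have r: "r = resonance_radius" using deriv_TT_eq_0_iff by blast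
    show "\<omega> = a * real_of_int m * Xi l a / (r^2 + a^2)"
      using omega_eq_iff resonance_radius_mem r by blast
    show "\<bar>deriv (deriv (TT l a M \<omega> m)) r\<bar> > 0"
      using deriv2_TT_resonance_pos r by simp
    show "TT l a M \<omega> m r \<le> TT l a M \<omega> m s" if "s \<in> {rp<..<rbp}" for s
      using TT_resonance_le[OF that] r by simp
  qed
qed

end
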